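(* Let $\mathcal{H}$ be a separable complex Hilbert space, $U$ a unitary operator on $\mathcal{H}$ with spectral measure $E(\cdot)$, $\mu$ a finite positive Borel measure on $\mathbb{T}$, and $C$ a conjugation on $\mathcal{H}$ with $CUC = U$. Then (a) $C\mathcal{H}_\mu = \mathcal{H}_{\mu^c}$ and $C\mathcal{H}_\mu^\perp = \mathcal{H}_{\mu^c}^\perp$; and thus (b) $C = C_{\mu,\mu^c}\oplus C'_{\mu,\mu^c}$, where $C_{\mu,\mu^c} = C|_{\mathcal{H}_\mu}:\mathcal{H}_\mu\to\mathcal{H}_{\mu^c}$ and $C'_{\mu,\mu^c} = C|_{\mathcal{H}_\mu^\perp}:\mathcal{H}_\mu^\perp\to\mathcal{H}_{\mu^c}^\perp$ are antilinear surjective isometries.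
   Context: A conjugation is an antilinear, isometric map $C$ with $C^2=I$. $E(\cdot)$ is the spectral measure of $U$ ($U=\int\xi\,dE(\xi)$). For $x\in\mathcal{H}$, $\mu_x$ is the finite positive Borel measure $\mu_x(\Omega) = \langle E(\Omega)x, x\rangle$. For a finite positive Borel measure $\mu$ on $\mathbb{T}$, $\mathcal{H}_\mu := \{x\in\mathcal{H} : \mu_x \ll \mu\}$ (a closed reducing subspace of $U$), and $\mu^c(\Omega) := \mu(\{\overline{\xi}:\xi\in\Omega\})$. *)

theory Defs
  imports "HOL-Analysis.Analysis" "HOL-Probability.Probability"
begin

text \<open>A complex Hilbert space is modelled as a real Banach space 'h together with a
complex scalar multiplication smul (extending scaleR) and a complex inner product ip
(linear in the first, conjugate-linear in the second argument) inducing the norm.\<close>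

definition complex_hilbert :: "(complex \<Rightarrow> 'h::banach \<Rightarrow> 'h) \<Rightarrow> ('h \<Rightarrow> 'h \<Rightarrow> complex) \<Rightarrow> bool" where
  "complex_hilbert smul ip \<longleftrightarrow>
     (\<forall>a x y. smul a (x + y) = smul a x + smul a y) \<and>
     (\<forall>a b x. smul (a + b) x = smul a x + smul b x) \<and>
     (\<forall>a b x. smul (a * b) x = smul a (smul b x)) \<and>
     (\<forall>r x. smul (complex_of_real r) x = r *\<^sub>R x) \<and>
     (\<forall>x y z. ip (x + y) z = ip x z + ip y z) \<and>
     (\<forall>a x y. ip (smul a x) y = a * ip x y) \<and>
     (\<forall>x y. ip y x = cnj (ip x y)) \<and>
     (\<forall>x. ip x x = complex_of_real ((norm x)\<^sup>2))"

definition separable_hspace :: "'h::topological_space itself \<Rightarrow> bool" where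
  "separable_hspace _ \<longleftrightarrow> (\<exists>D::'h set. countable D \<and> closure D = UNIV)"

definition clinear_map :: "(complex \<Rightarrow> 'h::banach \<Rightarrow> 'h) \<Rightarrow> ('h \<Rightarrow> 'h) \<Rightarrow> bool" where
  "clinear_map smul f \<longleftrightarrow> (\<forall>x y. f (x + y) = f x + f y) \<and> (\<forall>a x. f (smul a x) = smul a (f x))"

definition unitary_op :: "(complex \<Rightarrow> 'h::banach \<Rightarrow> 'h) \<Rightarrow> ('h \<Rightarrow> 'h \<Rightarrow> complex) \<Rightarrow> ('h \<Rightarrow> 'h) \<Rightarrow> bool" where
  "unitary_op smul ip U \<longleftrightarrow> clinear_map smul U \<and> surj U \<and> (\<forall>x y. ip (U x) (U y) = ip x y)"

definition conjugation :: "(complex \<Rightarrow> 'h::banach \<Rightarrow> 'h) \<Rightarrow> ('h \<Rightarrow> 'h) \<Rightarrow> bool" where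
  "conjugation smul C \<longleftrightarrow>
     (\<forall>x y. C (x + y) = C x + C y) \<and> (\<forall>a x. C (smul a x) = smul (cnj a) (C x)) \<and>
     (\<forall>x. norm (C x) = norm x) \<and> (\<forall>x. C (C x) = x)"

definition orth_projection :: "(complex \<Rightarrow> 'h::banach \<Rightarrow> 'h) \<Rightarrow> ('h \<Rightarrow> 'h \<Rightarrow> complex) \<Rightarrow> ('h \<Rightarrow> 'h) \<Rightarrow> bool" where
  "orth_projection smul ip P \<longleftrightarrow> clinear_map smul P \<and> (\<forall>x. P (P x) = P x) \<and> (\<forall>x y. ip (P x) y = ip x (P y))"

abbreviation circle_borel :: "complex measure" where
  "circle_borel \<equiv> restrict_space borel (sphere 0 1)"

definition pv_measure :: "(complex \<Rightarrow> 'h::banach \<Rightarrow> 'h) \<Rightarrow> ('h \<Rightarrow> 'h \<Rightarrow> complex) \<Rightarrow> (complex set \<Rightarrow> 'h \<Rightarrow> 'h) \<Rightarrow> bool" where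
  "pv_measure smul ip E \<longleftrightarrow>
     (\<forall>\<Omega>\<in>sets circle_borel. orth_projection smul ip (E \<Omega>)) \<and>
     E {} = (\<lambda>x. 0) \<and> E (sphere 0 1) = id \<and>
     (\<forall>A\<in>sets circle_borel. \<forall>B\<in>sets circle_borel. E (A \<inter> B) = E A \<circ> E B) \<and>
     (\<forall>A::nat \<Rightarrow> complex set. range A \<subseteq> sets circle_borel \<longrightarrow> disjoint_family A \<longrightarrow>
        (\<forall>x. (\<lambda>n. E (A n) x) sums E (\<Union>n. A n) x))"

definition spec_meas :: "('h \<Rightarrow> 'h \<Rightarrow> complex) \<Rightarrow> (complex set \<Rightarrow> 'h \<Rightarrow> 'h) \<Rightarrow> 'h \<Rightarrow> complex measure" where
  "spec_meas ip E x = measure_of (sphere 0 1) (sets circle_borel) (\<lambda>\<Omega>. ennreal (Re (ip (E \<Omega> x) x)))"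

text \<open>E is the spectral measure of U, i.e. U = \<integral> xi dE(xi) (weakly: <Ux,x> = \<integral> xi d mu_x).\<close>
definition spectral_measure_of :: "(complex \<Rightarrow> 'h::banach \<Rightarrow> 'h) \<Rightarrow> ('h \<Rightarrow> 'h \<Rightarrow> complex) \<Rightarrow> ('h \<Rightarrow> 'h) \<Rightarrow> (complex set \<Rightarrow> 'h \<Rightarrow> 'h) \<Rightarrow> bool" where
  "spectral_measure_of smul ip U E \<longleftrightarrow> pv_measure smul ip E \<and>
     (\<forall>x. ip (U x) x = (\<integral>\<xi>. \<xi> \<partial>(spec_meas ip E x)))"

definition H_sub :: "('h \<Rightarrow> 'h \<Rightarrow> complex) \<Rightarrow> (complex set \<Rightarrow> 'h \<Rightarrow> 'h) \<Rightarrow> complex measure \<Rightarrow> 'h set" where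
  "H_sub ip E M = {x. absolutely_continuous M (spec_meas ip E x)}"

definition conj_measure :: "complex measure \<Rightarrow> complex measure" where
  "conj_measure M = distr M M cnj"

definition orth_compl :: "('h \<Rightarrow> 'h \<Rightarrow> complex) \<Rightarrow> 'h set \<Rightarrow> 'h set" where
  "orth_compl ip S = {y. \<forall>x\<in>S. ip x y = 0}"

end

theory Submission
  imports Defs
begin

text \<open>
  The map \<open>A \<mapsto> C E(cnj A) C\<close> is again a projection-valued measure, and it represents \<open>U\<close>:
  conjugating \<open>\<langle>Ux, x\<rangle> = \<integral> \<xi> d\<mu>\<^sub>x\<close> by the antiunitary \<open>C\<close> and using \<open>CUC = U\<close> turns it into the
  integral of \<open>cnj \<xi>\<close>. A unitary has only one spectral measure, hence \<open>\<mu>\<^sub>C\<^sub>x(A) = \<mu>\<^sub>x(cnj A)\<close>,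
  i.e. \<open>\<mu>\<^sub>C\<^sub>x = (\<mu>\<^sub>x)\<^sup>c\<close>, and so \<open>\<mu>\<^sub>x \<ll> \<mu>\<close> iff \<open>\<mu>\<^sub>C\<^sub>x \<ll> \<mu>\<^sup>c\<close>. Since \<open>\<langle>Cx, Cy\<rangle>\<close> is the conjugate of
  \<open>\<langle>x, y\<rangle>\<close>, \<open>C\<close> also carries orthogonal complements to orthogonal complements. The splitting
  of \<open>x\<close> is \<open>E(\<bbbT> - N)x + E(N)x\<close>, where \<open>N\<close> is a \<open>\<mu>\<close>-null set of maximal \<open>\<mu>\<^sub>x\<close>-measure.

  Uniqueness is proved directly; let \<open>E'\<close> be a second spectral measure of \<open>U\<close>. Every
  \<open>E(A)\<close> commutes with \<open>U\<close>, because the quadratic form \<open>\<langle>Ux, x\<rangle>\<close> splits along \<open>E(A)\<close>.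
  If \<open>A\<close> lies in a small disc around \<open>\<lambda>\<close> and \<open>B\<close> stays away from it, \<open>U - \<lambda>\<close>
  contracts the range of \<open>E(A)\<close> and expands the range of \<open>E'(B)\<close>; iterating shows
  \<open>E'(B)E(A) = 0\<close>. A compactness argument extends this to separated sets, which gives
  \<open>\<parallel>E'(F)x\<parallel> = \<parallel>E(F)x\<parallel>\<close> for closed \<open>F\<close>, and inner regularity does the rest.
\<close>

section \<open>Complex inner product spaces\<close>

locale hilbert_space =
  fixes smul :: "complex \<Rightarrow> 'h::banach \<Rightarrow> 'h" and ip :: "'h \<Rightarrow> 'h \<Rightarrow> complex"
  assumes hilb: "complex_hilbert smul ip"
begin

lemma smul_add: "smul a (x + y) = smul a x + smul a y"
  and ip_add_left: "ip (x + y) z = ip x z + ip y z"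
  and ip_smul_left: "ip (smul a x) y = a * ip x y"
  and ip_sym: "ip y x = cnj (ip x y)"
  and ip_self: "ip x x = complex_of_real ((norm x)\<^sup>2)"
  using hilb unfolding complex_hilbert_def by blast+

lemma smul_zero [simp]: "smul a 0 = 0"
  using smul_add[of a 0 0] by simp

lemma ip_add_right: "ip x (y + z) = ip x y + ip x z"
  by (metis ip_sym ip_add_left complex_cnj_add)

lemma ip_smul_right: "ip x (smul a y) = cnj a * ip x y"
  by (metis ip_sym ip_smul_left complex_cnj_mult)

lemma ip_zero_left [simp]: "ip 0 y = 0"
  using ip_add_left[of 0 0 y] by simp

lemma ip_zero_right [simp]: "ip x 0 = 0"
  using ip_add_right[of x 0 0] by simp

lemma ip_diff_left: "ip (x - y) z = ip x z - ip y z"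
  by (metis add_diff_cancel diff_add_cancel ip_add_left)

lemma ip_diff_right: "ip x (y - z) = ip x y - ip x z"
  by (metis add_diff_cancel diff_add_cancel ip_add_right)

lemma Re_ip_self: "Re (ip x x) = (norm x)\<^sup>2"
  by (simp add: ip_self)

lemma ip_self_eq_0_iff: "ip x x = 0 \<longleftrightarrow> x = 0"
  by (simp add: ip_self)

lemma norm_add_sq: "(norm (x + y))\<^sup>2 = (norm x)\<^sup>2 + (norm y)\<^sup>2 + 2 * Re (ip x y)"
proof -
  have "(norm (x + y))\<^sup>2 = Re (ip x x) + Re (ip x y) + Re (ip y x) + Re (ip y y)"
    by (simp add: Re_ip_self[symmetric] ip_add_left ip_add_right)
  then show ?thesis
    by (simp add: Re_ip_self ip_sym[of x y])
qed

lemma norm_diff_sq: "(norm (x - y))\<^sup>2 = (norm x)\<^sup>2 + (norm y)\<^sup>2 - 2 * Re (ip x y)"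
  using norm_add_sq[of x "- y"] ip_diff_right[of x 0 y] by simp

lemma norm_smul: "norm (smul a x) = cmod a * norm x"
proof -
  have "ip (smul a x) (smul a x) = (a * cnj a) * ip x x"
    by (simp add: ip_smul_left ip_smul_right)
  also have "\<dots> = complex_of_real ((cmod a * norm x)\<^sup>2)"
    by (simp add: ip_self complex_mult_cnj cmod_power2 power_mult_distrib)
  finally have "(norm (smul a x))\<^sup>2 = (cmod a * norm x)\<^sup>2"
    by (simp only: ip_self of_real_eq_iff)
  then show ?thesis
    by (simp add: power2_eq_iff_nonneg)
qed

lemma continuous_on_Re_ip_left: "continuous_on UNIV (\<lambda>y. Re (ip y x))"
proof -
  have "continuous_on UNIV (\<lambda>y. ((norm (y + x))\<^sup>2 - (norm y)\<^sup>2 - (norm x)\<^sup>2) / 2)"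
    by (intro continuous_intros) auto
  then show ?thesis
    by (simp add: norm_add_sq)
qed

lemma antilinear_isometry_ip:
  assumes add: "\<And>x y. C (x + y) = C x + C y"
    and antilinear: "\<And>a x. C (smul a x) = smul (cnj a) (C x)"
    and isometric: "\<And>x. norm (C x) = norm x"
  shows "ip (C x) (C y) = cnj (ip x y)"
proof -
  have Re_eq: "Re (ip (C x) (C y)) = Re (ip x y)" for x y
    using norm_add_sq[of x y] norm_add_sq[of "C x" "C y"] by (simp add: add[symmetric] isometric)
  have "Im (ip (C x) (C y)) = Re (ip (C x) (C (smul (- \<i>) y)))"
    by (simp add: antilinear ip_smul_right)
  also have "\<dots> = - Im (ip x y)"
    by (simp add: Re_eq ip_smul_right)
  finally show ?thesis
    using Re_eq[of x y] by (simp add: complex_eq_iff)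
qed

lemma orth_projection_add: "orth_projection smul ip P \<Longrightarrow> P (x + y) = P x + P y"
  and orth_projection_smul: "orth_projection smul ip P \<Longrightarrow> P (smul a x) = smul a (P x)"
  and orth_projection_idem: "orth_projection smul ip P \<Longrightarrow> P (P x) = P x"
  and orth_projection_self_adjoint: "orth_projection smul ip P \<Longrightarrow> ip (P x) y = ip x (P y)"
  unfolding orth_projection_def clinear_map_def by blast+

lemma orth_projection_zero: "orth_projection smul ip P \<Longrightarrow> P 0 = 0"
  using orth_projection_add[of P 0 0] by simp

lemma orth_projection_diff: "orth_projection smul ip P \<Longrightarrow> P (x - y) = P x - P y"
  by (metis add_diff_cancel diff_add_cancel orth_projection_add)

lemma orth_projection_norm_le:
  assumes P: "orth_projection smul ip P"
  shows "norm (P x) \<le> norm x"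
proof -
  have "ip (P x) (x - P x) = 0"
    by (simp add: orth_projection_self_adjoint[OF P] orth_projection_diff[OF P]
        orth_projection_idem[OF P] ip_diff_right)
  then have "(norm x)\<^sup>2 = (norm (P x))\<^sup>2 + (norm (x - P x))\<^sup>2"
    using norm_add_sq[of "P x" "x - P x"] by simp
  then show ?thesis
    by (metis le_add_same_cancel1 norm_ge_zero power2_le_imp_le zero_le_power2)
qed

lemma orth_projection_ip_self:
  "orth_projection smul ip P \<Longrightarrow> ip (P x) x = complex_of_real ((norm (P x))\<^sup>2)"
  by (metis ip_self orth_projection_idem orth_projection_self_adjoint)

end

lemma sums_additive_continuous:
  fixes f :: "'a::real_normed_vector \<Rightarrow> 'b::real_normed_vector"
  assumes add: "\<And>a b. f (a + b) = f a + f b" and cont: "continuous_on UNIV f"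
    and sums: "g sums s"
  shows "(\<lambda>n. f (g n)) sums f s"
proof -
  have partial_sums: "(\<Sum>i<n. f (g i)) = f (\<Sum>i<n. g i)" for n
    using add[of 0 0] by (induction n) (simp_all add: add)
  have "(\<lambda>n. f (\<Sum>i<n. g i)) \<longlonglongrightarrow> f s"
    using sums unfolding sums_def by (rule continuous_on_tendsto_compose[OF cont]) auto
  then show ?thesis
    unfolding sums_def partial_sums .
qed

section \<open>Measures on the circle\<close>

lemma sets_circle_borel_iff: "A \<in> sets circle_borel \<longleftrightarrow> A \<subseteq> sphere 0 1 \<and> A \<in> sets borel"
  by (rule sets_restrict_space_iff) auto

lemma sphere_in_circle_borel [simp]: "sphere 0 1 \<in> sets circle_borel"
  using sets.top[of circle_borel] by simp

lemma image_cnj_eq_vimage: "cnj ` A = cnj -` A"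
  by (auto simp: image_iff) (metis complex_cnj_cnj)

lemma image_cnj_cnj [simp]: "cnj ` cnj ` A = A"
  by (simp add: image_image)

lemma image_cnj_sphere [simp]: "cnj ` sphere 0 1 = sphere 0 1"
  by (auto simp: image_cnj_eq_vimage)

lemma cnj_image_in_circle_borel:
  assumes "A \<in> sets circle_borel"
  shows "cnj ` A \<in> sets circle_borel"
proof -
  have "cnj \<in> borel_measurable borel"
    by (intro borel_measurable_continuous_onI continuous_intros)
  then have "cnj -` A \<in> sets borel"
    using assms measurable_sets[of cnj borel borel A] by (simp add: sets_circle_borel_iff)
  moreover have "cnj ` A \<subseteq> sphere 0 1"
    using assms by (auto simp: sets_circle_borel_iff)
  ultimately show ?thesis
    by (simp add: sets_circle_borel_iff image_cnj_eq_vimage)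
qed

lemma cnj_measurable_circle_borel: "cnj \<in> measurable circle_borel circle_borel"
proof (rule measurableI)
  fix A assume A: "A \<in> sets circle_borel"
  then have "cnj -` A \<inter> space circle_borel = cnj ` A"
    by (auto simp: sets_circle_borel_iff image_cnj_eq_vimage)
  then show "cnj -` A \<inter> space circle_borel \<in> sets circle_borel"
    using cnj_image_in_circle_borel[OF A] by simp
qed simp

lemma ball_circle_borel_cnj_image:
  "(\<forall>A\<in>sets circle_borel. P (cnj ` A)) \<longleftrightarrow> (\<forall>A\<in>sets circle_borel. P A)"
  by (metis cnj_image_in_circle_borel image_cnj_cnj)

lemma sets_conj_measure [simp]: "sets (conj_measure M) = sets M"
  by (simp add: conj_measure_def)

lemma emeasure_conj_measure:
  assumes M: "sets M = sets circle_borel" and A: "A \<in> sets circle_borel"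
  shows "emeasure (conj_measure M) A = emeasure M (cnj ` A)"
proof -
  have "cnj \<in> measurable M M"
    using cnj_measurable_circle_borel by (simp add: measurable_cong_sets[OF M M])
  moreover have "cnj -` A \<inter> space M = cnj ` A"
    using A sets_eq_imp_space_eq[OF M] by (auto simp: sets_circle_borel_iff image_cnj_eq_vimage)
  ultimately show ?thesis
    using A M by (simp add: conj_measure_def emeasure_distr)
qed

lemma circle_dist_sq:
  fixes \<xi> l :: complex
  assumes "cmod \<xi> = 1" "cmod l = 1"
  shows "(cmod (\<xi> - l))\<^sup>2 = 2 - 2 * Re (cnj l * \<xi>)"
proof -
  have "(Re \<xi>)\<^sup>2 + (Im \<xi>)\<^sup>2 = 1" "(Re l)\<^sup>2 + (Im l)\<^sup>2 = 1"
    using assms by (simp_all add: cmod_power2[symmetric])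
  then show ?thesis
    by (simp add: cmod_power2 power2_diff algebra_simps)
qed

lemma circle_dist_sq_le_4:
  fixes \<xi> l :: complex
  assumes "cmod \<xi> = 1" "cmod l = 1"
  shows "(cmod (\<xi> - l))\<^sup>2 \<le> 4"
proof -
  have "cmod (\<xi> - l) \<le> 2"
    using norm_triangle_ineq4[of \<xi> l] assms by simp
  then show ?thesis
    using power_mono[of "cmod (\<xi> - l)" 2 2] by simp
qed

lemma finite_measure_maximal_null_set:
  fixes M \<nu> :: "'a measure"
  assumes sets: "sets \<nu> = sets M" and fin: "finite_measure \<nu>"
  obtains N where "N \<in> null_sets M" "\<And>A. A \<in> null_sets M \<Longrightarrow> emeasure \<nu> (A - N) = 0"
proof -
  interpret finite_measure \<nu>
    by (rule fin)
  define s where "s = (SUP N\<in>null_sets M. measure \<nu> N)"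
  have bdd: "bdd_above ((\<lambda>N. measure \<nu> N) ` null_sets M)"
    by (rule bdd_aboveI[where M = "measure \<nu> (space \<nu>)"]) (auto intro!: bounded_measure)
  have "\<exists>N\<in>null_sets M. s - 1 / Suc n < measure \<nu> N" for n :: nat
  proof -
    have "s - 1 / Suc n < (SUP N\<in>null_sets M. measure \<nu> N)"
      by (simp add: s_def)
    moreover have "null_sets M \<noteq> {}"
      by auto
    ultimately show ?thesis
      using less_cSUP_iff[OF _ bdd] by blast
  qed
  then obtain Ns where Ns: "\<And>n. Ns n \<in> null_sets M" "\<And>n. s - 1 / Suc n < measure \<nu> (Ns n)"
    by metis
  define N where "N = (\<Union>n. Ns n)"
  have N: "N \<in> null_sets M"
    unfolding N_def using Ns(1) by (rule null_sets_UN)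
  then have N_sets: "N \<in> sets \<nu>"
    using sets by (simp add: null_sets_def)
  have approx: "s - 1 / Suc n < measure \<nu> N" for n
  proof -
    have "measure \<nu> (Ns n) \<le> measure \<nu> N"
      using N_sets by (intro finite_measure_mono) (auto simp: N_def)
    with Ns(2)[of n] show ?thesis
      by linarith
  qed
  have s_le: "s \<le> measure \<nu> N"
  proof (rule ccontr)
    assume "\<not> s \<le> measure \<nu> N"
    then obtain n where "inverse (real (Suc n)) < s - measure \<nu> N"
      using reals_Archimedean[of "s - measure \<nu> N"] by auto
    with approx[of n] show False
      by (simp add: inverse_eq_divide)
  qed
  have "emeasure \<nu> (A - N) = 0" if A: "A \<in> null_sets M" for A
  proof -
    have "N \<union> A \<in> null_sets M"
      using N A by (rule null_sets.Un)
    then have "measure \<nu> (N \<union> A) \<le> s"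
      unfolding s_def by (intro cSUP_upper[OF _ bdd])
    moreover have A_N: "A - N \<in> sets \<nu>"
      using A N_sets sets by (auto simp: null_sets_def)
    then have "measure \<nu> (N \<union> A) = measure \<nu> N + measure \<nu> (A - N)"
      using finite_measure_Union[OF N_sets, of "A - N"] by (simp add: Un_Diff_cancel)
    ultimately have "measure \<nu> (A - N) = 0"
      using s_le measure_nonneg[of \<nu> "A - N"] by linarith
    with A_N show ?thesis
      by (simp add: emeasure_eq_measure)
  qed
  with N show thesis
    by (rule that)
qed

section \<open>Projection-valued measures and their scalar measures\<close>

locale projection_valued_measure = hilbert_space smul ip
  for smul :: "complex \<Rightarrow> 'h::banach \<Rightarrow> 'h" and ip +
  fixes E :: "complex set \<Rightarrow> 'h \<Rightarrow> 'h"
  assumes pv_measure: "pv_measure smul ip E"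
begin

lemma E_orth_projection: "A \<in> sets circle_borel \<Longrightarrow> orth_projection smul ip (E A)"
  and E_empty_fun: "E {} = (\<lambda>x. 0)"
  and E_sphere_fun: "E (sphere 0 1) = id"
  and E_Int_fun: "A \<in> sets circle_borel \<Longrightarrow> B \<in> sets circle_borel \<Longrightarrow> E (A \<inter> B) = E A \<circ> E B"
  and E_sums:
    "range F \<subseteq> sets circle_borel \<Longrightarrow> disjoint_family F \<Longrightarrow> (\<lambda>n. E (F n) x) sums E (\<Union>n. F n) x"
  using pv_measure unfolding pv_measure_def by blast+

lemma E_empty [simp]: "E {} x = 0"
  by (simp add: E_empty_fun)

lemma E_sphere [simp]: "E (sphere 0 1) x = x"
  by (simp add: E_sphere_fun)

lemma E_Int: "A \<in> sets circle_borel \<Longrightarrow> B \<in> sets circle_borel \<Longrightarrow> E (A \<inter> B) x = E A (E B x)"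
  by (simp add: E_Int_fun)

lemma E_idem: "A \<in> sets circle_borel \<Longrightarrow> E A (E A x) = E A x"
  using E_orth_projection orth_projection_idem by blast

lemma E_norm_le: "A \<in> sets circle_borel \<Longrightarrow> norm (E A x) \<le> norm x"
  using E_orth_projection orth_projection_norm_le by blast

lemma E_Un:
  assumes A: "A \<in> sets circle_borel" and B: "B \<in> sets circle_borel" and disj: "A \<inter> B = {}"
  shows "E (A \<union> B) x = E A x + E B x"
proof -
  define F where "F n = (if n = 0 then A else if n = 1 then B else {})" for n :: nat
  have "range F \<subseteq> sets circle_borel" "disjoint_family F"
    using A B disj by (auto simp: F_def disjoint_family_on_def)
  moreover have "(\<Union>n. F n) = A \<union> B"
    by (auto simp: F_def split: if_splits intro: exI[of _ 0] exI[of _ 1])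
  ultimately have "(\<lambda>n. E (F n) x) sums E (A \<union> B) x"
    using E_sums by metis
  moreover have "(\<lambda>n. E (F n) x) sums (\<Sum>n\<in>{0, 1}. E (F n) x)"
    by (rule sums_finite) (auto simp: F_def)
  ultimately show ?thesis
    by (simp add: F_def sums_unique2)
qed

lemma E_Diff_sphere:
  assumes A: "A \<in> sets circle_borel"
  shows "E (sphere 0 1 - A) x = x - E A x"
proof -
  have "sphere 0 1 - A \<in> sets circle_borel" "A \<union> (sphere 0 1 - A) = sphere 0 1"
    using A by (auto simp: sets_circle_borel_iff)
  then show ?thesis
    using E_Un[OF A, of "sphere 0 1 - A" x] by (simp add: algebra_simps)
qed

lemma sets_spec_meas [simp, measurable_cong]: "sets (spec_meas ip E x) = sets circle_borel"
  using sets.space_closed[of circle_borel] sets.sigma_algebra_axioms[of circle_borel]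
  by (simp add: spec_meas_def sigma_algebra.sigma_sets_eq)

lemma space_spec_meas [simp]: "space (spec_meas ip E x) = sphere 0 1"
  using sets.space_closed[of circle_borel] by (simp add: spec_meas_def space_measure_of_conv)

lemma emeasure_spec_meas:
  assumes A: "A \<in> sets circle_borel"
  shows "emeasure (spec_meas ip E x) A = ennreal ((norm (E A x))\<^sup>2)"
proof -
  have Re_E: "Re (ip (E B x) x) = (norm (E B x))\<^sup>2" if "B \<in> sets circle_borel" for B
    using orth_projection_ip_self[OF E_orth_projection[OF that]] by simp
  have "countably_additive (sets circle_borel) (\<lambda>\<Omega>. ennreal (Re (ip (E \<Omega> x) x)))"
    unfolding countably_additive_def
  proof (intro allI impI)
    fix F :: "nat \<Rightarrow> complex set"
    assume F: "range F \<subseteq> sets circle_borel" "disjoint_family F"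
    have sums: "(\<lambda>n. Re (ip (E (F n) x) x)) sums Re (ip (E (\<Union>n. F n) x) x)"
      by (rule sums_additive_continuous[OF _ continuous_on_Re_ip_left E_sums[OF F]])
        (simp add: ip_add_left)
    have "0 \<le> Re (ip (E (F n) x) x)" for n
      using Re_E F by auto
    with sums show "(\<Sum>n. ennreal (Re (ip (E (F n) x) x))) = ennreal (Re (ip (E (\<Union>(range F)) x) x))"
      by (subst suminf_ennreal2) (auto simp: sums_iff)
  qed
  then have "emeasure (spec_meas ip E x) A = ennreal (Re (ip (E A x) x))"
    unfolding spec_meas_def
    by (intro emeasure_measure_of_sigma[OF _ _ _ A])
      (auto simp: positive_def intro: sets.sigma_algebra_axioms[of circle_borel, simplified])
  then show ?thesis
    using Re_E[OF A] by simp
qed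

lemma measure_spec_meas:
  "A \<in> sets circle_borel \<Longrightarrow> measure (spec_meas ip E x) A = (norm (E A x))\<^sup>2"
  by (simp add: measure_def emeasure_spec_meas)

lemma finite_measure_spec_meas: "finite_measure (spec_meas ip E x)"
  by (rule finite_measureI) (simp add: emeasure_spec_meas)

lemma integrable_spec_meas:
  fixes f :: "complex \<Rightarrow> 'b::{banach, second_countable_topology}"
  assumes f: "f \<in> borel_measurable borel" and bound: "\<And>z. z \<in> sphere 0 1 \<Longrightarrow> norm (f z) \<le> K"
  shows "integrable (spec_meas ip E x) f"
proof -
  interpret finite_measure "spec_meas ip E x"
    by (rule finite_measure_spec_meas)
  have "f \<in> borel_measurable (spec_meas ip E x)"
    by (subst measurable_cong_sets[OF sets_spec_meas refl]) (rule measurable_restrict_space1[OF f])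
  then show ?thesis
    using bound by (intro integrable_const_bound[where B = K]) auto
qed

lemma AE_spec_meas_in:
  assumes A: "A \<in> sets circle_borel" and y: "E A y = y"
  shows "AE \<xi> in spec_meas ip E y. \<xi> \<in> A"
proof (rule AE_I')
  have "sphere 0 1 - A \<in> sets circle_borel"
    using A by auto
  then show "sphere 0 1 - A \<in> null_sets (spec_meas ip E y)"
    using y by (simp add: null_sets_def emeasure_spec_meas E_Diff_sphere[OF A])
qed auto

lemma spec_meas_E_eq_density:
  assumes A: "A \<in> sets circle_borel"
  shows "spec_meas ip E (E A w) = density (spec_meas ip E w) (\<lambda>\<xi>. ennreal (indicator A \<xi>))"
proof (rule measure_eqI)
  fix B assume "B \<in> sets (spec_meas ip E (E A w))"
  then have B: "B \<in> sets circle_borel"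
    by simp
  have "emeasure (density (spec_meas ip E w) (\<lambda>\<xi>. ennreal (indicator A \<xi>))) B
      = (\<integral>\<^sup>+ \<xi>. ennreal (indicator A \<xi>) * indicator B \<xi> \<partial>spec_meas ip E w)"
    using A B by (intro emeasure_density) auto
  also have "\<dots> = (\<integral>\<^sup>+ \<xi>. indicator (B \<inter> A) \<xi> \<partial>spec_meas ip E w)"
    by (intro nn_integral_cong) (auto split: split_indicator)
  also have "\<dots> = emeasure (spec_meas ip E (E A w)) B"
    using A B by (simp add: emeasure_spec_meas E_Int)
  finally show "emeasure (spec_meas ip E (E A w)) B
      = emeasure (density (spec_meas ip E w) (\<lambda>\<xi>. ennreal (indicator A \<xi>))) B"
    by simp
qed simp

lemma integral_spec_meas_E:
  fixes f :: "complex \<Rightarrow> 'b::{banach, second_countable_topology}"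
  assumes A: "A \<in> sets circle_borel" and f: "f \<in> borel_measurable borel"
  shows "integral\<^sup>L (spec_meas ip E (E A w)) f
       = integral\<^sup>L (spec_meas ip E w) (\<lambda>\<xi>. indicator A \<xi> *\<^sub>R f \<xi>)"
proof -
  have "f \<in> borel_measurable (spec_meas ip E w)"
    by (subst measurable_cong_sets[OF sets_spec_meas refl]) (rule measurable_restrict_space1[OF f])
  with A show ?thesis
    unfolding spec_meas_E_eq_density[OF A] by (intro integral_density) auto
qed

lemma integral_spec_meas_split:
  fixes f :: "complex \<Rightarrow> 'b::{banach, second_countable_topology}"
  assumes A: "A \<in> sets circle_borel" and f: "f \<in> borel_measurable borel"
    and bound: "\<And>z. z \<in> sphere 0 1 \<Longrightarrow> norm (f z) \<le> K"
  shows "integral\<^sup>L (spec_meas ip E w) f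
       = integral\<^sup>L (spec_meas ip E (E A w)) f + integral\<^sup>L (spec_meas ip E (E (sphere 0 1 - A) w)) f"
proof -
  let ?A' = "sphere 0 1 - A"
  have A': "?A' \<in> sets circle_borel"
    using A by auto
  have "0 \<le> K"
    using order_trans[OF norm_ge_zero bound[of 1]] by simp
  then have integrable: "integrable (spec_meas ip E w) (\<lambda>\<xi>. indicator X \<xi> *\<^sub>R f \<xi>)"
    if "X \<in> sets circle_borel" for X
    using that f bound
    by (intro integrable_spec_meas[where K = K]) (auto simp: sets_circle_borel_iff indicator_def)
  have "integral\<^sup>L (spec_meas ip E w) f
      = integral\<^sup>L (spec_meas ip E w) (\<lambda>\<xi>. indicator A \<xi> *\<^sub>R f \<xi> + indicator ?A' \<xi> *\<^sub>R f \<xi>)"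
    by (rule Bochner_Integration.integral_cong) (auto simp: indicator_def)
  also have "\<dots> = integral\<^sup>L (spec_meas ip E w) (\<lambda>\<xi>. indicator A \<xi> *\<^sub>R f \<xi>)
                + integral\<^sup>L (spec_meas ip E w) (\<lambda>\<xi>. indicator ?A' \<xi> *\<^sub>R f \<xi>)"
    using A A' by (intro Bochner_Integration.integral_add integrable)
  finally show ?thesis
    using A A' f by (simp add: integral_spec_meas_E)
qed

lemma H_sub_iff:
  assumes M: "sets M = sets circle_borel"
  shows "x \<in> H_sub ip E M \<longleftrightarrow>
    (\<forall>N\<in>sets circle_borel. emeasure M N = 0 \<longrightarrow> emeasure (spec_meas ip E x) N = 0)"
  using M unfolding H_sub_def absolutely_continuous_def null_sets_def by auto

lemma exists_orth_decomposition_H_sub: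
  assumes M: "sets M = sets circle_borel"
  shows "\<exists>y\<in>H_sub ip E M. \<exists>z\<in>orth_compl ip (H_sub ip E M). x = y + z"
proof -
  have "sets (spec_meas ip E x) = sets M"
    using M by simp
  then obtain N where N: "N \<in> null_sets M"
    and maximal: "\<And>A. A \<in> null_sets M \<Longrightarrow> emeasure (spec_meas ip E x) (A - N) = 0"
    by (rule finite_measure_maximal_null_set[OF _ finite_measure_spec_meas]) (rule that)
  have N_sets: "N \<in> sets circle_borel"
    using N M unfolding null_sets_def by blast
  define y where "y = E (sphere 0 1 - N) x"
  have "x = y + E N x"
    by (simp add: y_def E_Diff_sphere[OF N_sets])
  moreover have "y \<in> H_sub ip E M"
    unfolding H_sub_iff[OF M]
  proof (intro ballI impI)
    fix A assume A: "A \<in> sets circle_borel" "emeasure M A = 0"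
    have "A \<inter> (sphere 0 1 - N) = A - N"
      using A by (auto simp: sets_circle_borel_iff)
    moreover have "sphere 0 1 - N \<in> sets circle_borel" "A - N \<in> sets circle_borel"
      using A N_sets by auto
    ultimately have "emeasure (spec_meas ip E y) A = emeasure (spec_meas ip E x) (A - N)"
      using A by (simp add: y_def emeasure_spec_meas E_Int[symmetric])
    also have "\<dots> = 0"
      using A M by (intro maximal) (simp add: null_sets_def)
    finally show "emeasure (spec_meas ip E y) A = 0" .
  qed
  moreover have "E N x \<in> orth_compl ip (H_sub ip E M)"
    unfolding orth_compl_def
  proof safe
    fix w assume "w \<in> H_sub ip E M"
    then have "emeasure (spec_meas ip E w) N = 0"
      using N N_sets unfolding H_sub_iff[OF M] null_sets_def by blast
    then have "E N w = 0"
      using N_sets by (simp add: emeasure_spec_meas)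
    then show "ip w (E N x) = 0"
      using orth_projection_self_adjoint[OF E_orth_projection[OF N_sets], of w x] by simp
  qed
  ultimately show ?thesis
    by blast
qed

end

section \<open>Spectral measures of a unitary operator\<close>

locale spectral_representation = projection_valued_measure smul ip E
  for smul :: "complex \<Rightarrow> 'h::banach \<Rightarrow> 'h" and ip E +
  fixes U :: "'h \<Rightarrow> 'h"
  assumes unitary: "unitary_op smul ip U"
    and ip_U_eq_integral: "\<And>x. ip (U x) x = (\<integral>\<xi>. \<xi> \<partial>spec_meas ip E x)"
begin

lemma U_add: "U (x + y) = U x + U y"
  and U_smul: "U (smul a x) = smul a (U x)"
  and ip_U_U: "ip (U x) (U y) = ip x y"
  using unitary unfolding unitary_op_def clinear_map_def by blast+

lemma U_diff: "U (x - y) = U x - U y"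
  by (metis add_diff_cancel diff_add_cancel U_add)

lemma norm_U: "norm (U x) = norm x"
  using Re_ip_self[of "U x"] Re_ip_self[of x] by (simp add: ip_U_U power2_eq_iff_nonneg)

lemma ip_U_split:
  assumes A: "A \<in> sets circle_borel"
  shows "ip (U w) w = ip (U (E A w)) (E A w) + ip (U (E (sphere 0 1 - A) w)) (E (sphere 0 1 - A) w)"
  using integral_spec_meas_split[OF A, of "\<lambda>\<xi>. \<xi>" 1 w] by (simp add: ip_U_eq_integral)

lemma ip_U_range_kernel_E:
  assumes A: "A \<in> sets circle_borel" and u: "E A u = u" and v: "E A v = 0"
  shows "ip (U u) v = 0" and "ip (U v) u = 0"
proof -
  have P: "orth_projection smul ip (E A)"
    by (rule E_orth_projection[OF A])
  have quadratic: "ip (U (u + v')) (u + v') = ip (U u) u + ip (U v') v'" if v': "E A v' = 0" for v'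
  proof -
    have "E A (u + v') = u"
      using u v' orth_projection_add[OF P] by simp
    moreover from this have "E (sphere 0 1 - A) (u + v') = v'"
      by (simp add: E_Diff_sphere[OF A])
    ultimately show ?thesis
      using ip_U_split[OF A, of "u + v'"] by simp
  qed
  have "E A (smul \<i> v) = 0"
    using orth_projection_smul[OF P] v by simp
  from quadratic[OF v] quadratic[OF this]
  have "ip (U u) v + ip (U v) u = 0" and "- \<i> * ip (U u) v + \<i> * ip (U v) u = 0"
    by (simp_all add: U_add U_smul ip_add_left ip_add_right ip_smul_left ip_smul_right
        algebra_simps)
  then show "ip (U u) v = 0" and "ip (U v) u = 0"
    by (simp_all add: eq_neg_iff_add_eq_0[symmetric] add.commute)
qed

lemma U_E_commute:
  assumes A: "A \<in> sets circle_borel"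
  shows "U (E A x) = E A (U x)"
proof -
  have P: "orth_projection smul ip (E A)"
    by (rule E_orth_projection[OF A])
  have range: "E A (E A y) = E A y" and kernel: "E A (y - E A y) = 0" for y
    by (simp_all add: E_idem[OF A] orth_projection_diff[OF P])
  define z where "z = U (E A x) - E A (U (E A x))"
  have "ip (U (E A x)) z = 0"
    unfolding z_def by (rule ip_U_range_kernel_E(1)[OF A range kernel])
  moreover have "ip (E A (U (E A x))) z = 0"
    unfolding z_def by (simp add: orth_projection_self_adjoint[OF P] kernel)
  ultimately have "ip z z = 0"
    by (simp add: z_def ip_diff_left)
  then have "z = 0"
    by (simp add: ip_self_eq_0_iff)
  then have range_invariant: "U (E A x) = E A (U (E A x))"
    by (simp add: z_def)
  define w where "w = U (x - E A x)"
  have "ip (E A w) (E A w) = ip w (E A w)"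
    by (simp add: orth_projection_self_adjoint[OF P] range)
  also have "\<dots> = 0"
    unfolding w_def by (rule ip_U_range_kernel_E(2)[OF A range kernel])
  finally have "E A (U x) = E A (U (E A x))"
    by (simp add: ip_self_eq_0_iff w_def U_diff orth_projection_diff[OF P])
  with range_invariant show ?thesis
    by simp
qed

lemma norm_U_minus_smul_sq:
  assumes l: "cmod l = 1"
  shows "(norm (U y - smul l y))\<^sup>2 = (\<integral>\<xi>. (cmod (\<xi> - l))\<^sup>2 \<partial>spec_meas ip E y)"
proof -
  have int: "integrable (spec_meas ip E y) (\<lambda>\<xi>. cnj l * \<xi>)"
    by (rule integrable_spec_meas[where K = 1]) (auto simp: norm_mult l)
  have const: "(\<integral>\<xi>. 2 \<partial>spec_meas ip E y) = 2 * (norm y)\<^sup>2"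
    by (simp add: measure_spec_meas)
  have linear: "(\<integral>\<xi>. 2 * Re (cnj l * \<xi>) \<partial>spec_meas ip E y) = 2 * Re (cnj l * ip (U y) y)"
    by (simp only: integral_mult_right_zero integral_Re[OF int] ip_U_eq_integral)
  have "(\<integral>\<xi>. (cmod (\<xi> - l))\<^sup>2 \<partial>spec_meas ip E y) = (\<integral>\<xi>. 2 - 2 * Re (cnj l * \<xi>) \<partial>spec_meas ip E y)"
    by (rule Bochner_Integration.integral_cong) (simp_all add: circle_dist_sq l)
  also have "\<dots> = 2 * (norm y)\<^sup>2 - 2 * Re (cnj l * ip (U y) y)"
    using finite_measure.integrable_const[OF finite_measure_spec_meas]
      integrable_mult_right[OF integrable_Re[OF int], of 2]
    by (subst Bochner_Integration.integral_diff) (simp_all only: const linear)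
  also have "\<dots> = (norm (U y - smul l y))\<^sup>2"
    by (simp only: norm_diff_sq norm_U norm_smul l mult_1_left ip_smul_right)
  finally show ?thesis ..
qed

lemma integrable_circle_dist_sq:
  assumes l: "cmod l = 1"
  shows "integrable (spec_meas ip E y) (\<lambda>\<xi>. (cmod (\<xi> - l))\<^sup>2)"
proof (rule integrable_spec_meas[where K = 4])
  show "(\<lambda>\<xi>. (cmod (\<xi> - l))\<^sup>2) \<in> borel_measurable borel"
    by (intro borel_measurable_continuous_onI continuous_intros)
qed (use circle_dist_sq_le_4[OF _ l] in simp)

lemma norm_U_minus_smul_le:
  assumes l: "cmod l = 1" and A: "A \<in> sets circle_borel" and y: "E A y = y"
    and r: "\<And>\<xi>. \<xi> \<in> A \<Longrightarrow> cmod (\<xi> - l) \<le> r" and r_nonneg: "0 \<le> r"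
  shows "norm (U y - smul l y) \<le> r * norm y"
proof -
  have "(norm (U y - smul l y))\<^sup>2 = (\<integral>\<xi>. (cmod (\<xi> - l))\<^sup>2 \<partial>spec_meas ip E y)"
    by (rule norm_U_minus_smul_sq[OF l])
  also have "\<dots> \<le> (\<integral>\<xi>. r\<^sup>2 \<partial>spec_meas ip E y)"
  proof (rule integral_mono_AE[OF integrable_circle_dist_sq[OF l]])
    show "integrable (spec_meas ip E y) (\<lambda>\<xi>. r\<^sup>2)"
      by (rule finite_measure.integrable_const[OF finite_measure_spec_meas])
    show "AE \<xi> in spec_meas ip E y. (cmod (\<xi> - l))\<^sup>2 \<le> r\<^sup>2"
      using AE_spec_meas_in[OF A y] by eventually_elim (intro power_mono r; simp)
  qed
  also have "\<dots> = (r * norm y)\<^sup>2"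
    by (simp add: measure_spec_meas power_mult_distrib)
  finally show ?thesis
    by (rule power2_le_imp_le) (simp add: r_nonneg)
qed

lemma norm_U_minus_smul_ge:
  assumes l: "cmod l = 1" and B: "B \<in> sets circle_borel" and y: "E B y = y"
    and d: "\<And>\<xi>. \<xi> \<in> B \<Longrightarrow> d \<le> cmod (\<xi> - l)" and d_nonneg: "0 \<le> d"
  shows "d * norm y \<le> norm (U y - smul l y)"
proof -
  have "(d * norm y)\<^sup>2 = (\<integral>\<xi>. d\<^sup>2 \<partial>spec_meas ip E y)"
    by (simp add: measure_spec_meas power_mult_distrib)
  also have "\<dots> \<le> (\<integral>\<xi>. (cmod (\<xi> - l))\<^sup>2 \<partial>spec_meas ip E y)"
  proof (rule integral_mono_AE[OF _ integrable_circle_dist_sq[OF l]])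
    show "integrable (spec_meas ip E y) (\<lambda>\<xi>. d\<^sup>2)"
      by (rule finite_measure.integrable_const[OF finite_measure_spec_meas])
    show "AE \<xi> in spec_meas ip E y. d\<^sup>2 \<le> (cmod (\<xi> - l))\<^sup>2"
      using AE_spec_meas_in[OF B y] by eventually_elim (intro power_mono d d_nonneg)
  qed
  also have "\<dots> = (norm (U y - smul l y))\<^sup>2"
    by (rule norm_U_minus_smul_sq[OF l, symmetric])
  finally show ?thesis
    by (rule power2_le_imp_le) simp_all
qed

end

section \<open>Uniqueness of the spectral measure\<close>

lemma zero_if_le_geometric:
  fixes a b r d :: real
  assumes r: "0 \<le> r" "r < d" and a: "0 \<le> a" and le: "\<And>n. d ^ n * a \<le> r ^ n * b"
  shows "a = 0"
proof -
  have d: "0 < d"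
    using r by simp
  have "a \<le> (r / d) ^ n * b" for n
    using le[of n] d by (simp add: power_divide pos_le_divide_eq mult.commute)
  moreover have "(\<lambda>n. (r / d) ^ n * b) \<longlonglongrightarrow> 0"
    using r d by (intro tendsto_mult_left_zero LIMSEQ_power_zero) simp
  ultimately have "a \<le> 0"
    by (intro LIMSEQ_le_const) auto
  with a show ?thesis
    by simp
qed

lemma decseq_infdist_less: "decseq (\<lambda>n. {x. infdist x F < 1 / Suc n})"
proof (rule decseq_SucI)
  fix n
  have "1 / real (Suc (Suc n)) \<le> 1 / real (Suc n)"
    by (intro divide_left_mono) auto
  then show "{x. infdist x F < 1 / Suc (Suc n)} \<subseteq> {x. infdist x F < 1 / Suc n}"
    by auto
qed

lemma Inter_infdist_less_closed:
  assumes F: "closed F" "F \<noteq> {}"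
  shows "(\<Inter>n. {x. infdist x F < 1 / Suc n}) = F"
proof
  show "F \<subseteq> (\<Inter>n. {x. infdist x F < 1 / Suc n})"
    by (auto simp: infdist_zero)
  show "(\<Inter>n. {x. infdist x F < 1 / Suc n}) \<subseteq> F"
  proof
    fix x assume x: "x \<in> (\<Inter>n. {x. infdist x F < 1 / Suc n})"
    have "infdist x F \<le> 0"
    proof (rule ccontr)
      assume "\<not> infdist x F \<le> 0"
      then obtain n where "inverse (real (Suc n)) < infdist x F"
        using reals_Archimedean[of "infdist x F"] by auto
      moreover have "infdist x F < 1 / Suc n"
        using x by blast
      ultimately show False
        by (simp add: inverse_eq_divide)
    qed
    then have "x \<in> closure F"
      using in_closure_iff_infdist_zero[OF F(2)] infdist_nonneg[of x F] by simp
    then show "x \<in> F"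
      using F(1) by (simp add: closure_closed)
  qed
qed

locale two_spectral_representations =
  R1: spectral_representation smul ip E U + R2: spectral_representation smul ip E' U
  for smul :: "complex \<Rightarrow> 'h::banach \<Rightarrow> 'h" and ip E E' U
begin

lemma E'_E_zero_if_disc_separated:
  assumes l: "cmod l = 1" and A: "A \<in> sets circle_borel" and B: "B \<in> sets circle_borel"
    and r: "\<And>\<xi>. \<xi> \<in> A \<Longrightarrow> cmod (\<xi> - l) \<le> r" and d: "\<And>\<xi>. \<xi> \<in> B \<Longrightarrow> d \<le> cmod (\<xi> - l)"
    and r_nonneg: "0 \<le> r" and r_less_d: "r < d"
  shows "E' B (E A x) = 0"
proof -
  have d_nonneg: "0 \<le> d"
    using r_nonneg r_less_d by simp
  have PA: "orth_projection smul ip (E A)" and PB: "orth_projection smul ip (E' B)"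
    by (rule R1.E_orth_projection[OF A], rule R2.E_orth_projection[OF B])
  define T where "T w = U w - smul l w" for w
  have T_apply: "T w = U w - smul l w" for w
    by (simp add: T_def)
  have T_E: "E A (T w) = T (E A w)" and T_E': "E' B (T w) = T (E' B w)" for w
    by (simp_all add: T_def R1.orth_projection_diff[OF PA] R1.orth_projection_smul[OF PA]
        R1.orth_projection_diff[OF PB] R1.orth_projection_smul[OF PB]
        R1.U_E_commute[OF A] R2.U_E_commute[OF B])
  define y where "y = E A x"
  define z where "z = E' B y"
  have y_range: "E A ((T ^^ n) y) = (T ^^ n) y" for n
    by (induction n) (simp_all add: y_def R1.E_idem[OF A] T_E)
  have upper: "norm ((T ^^ n) y) \<le> r ^ n * norm y" for n
  proof (induction n)
    case (Suc n)
    have "norm (T ((T ^^ n) y)) \<le> r * norm ((T ^^ n) y)"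
      using R1.norm_U_minus_smul_le[OF l A y_range r r_nonneg] by (simp only: T_apply)
    also have "\<dots> \<le> r * (r ^ n * norm y)"
      by (rule mult_left_mono[OF Suc r_nonneg])
    finally show ?case
      by simp
  qed simp
  have z_iter: "(T ^^ n) z = E' B ((T ^^ n) y)" for n
    by (induction n) (simp_all add: z_def T_E')
  have z_range: "E' B ((T ^^ n) z) = (T ^^ n) z" for n
    by (simp add: z_iter R2.E_idem[OF B])
  have lower: "d ^ n * norm z \<le> norm ((T ^^ n) z)" for n
  proof (induction n)
    case (Suc n)
    have "d * (d ^ n * norm z) \<le> d * norm ((T ^^ n) z)"
      by (rule mult_left_mono[OF Suc d_nonneg])
    also have "\<dots> \<le> norm (T ((T ^^ n) z))"
      using R2.norm_U_minus_smul_ge[OF l B z_range d d_nonneg] by (simp only: T_apply)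
    finally show ?case
      by simp
  qed simp
  have "d ^ n * norm z \<le> r ^ n * norm y" for n
  proof -
    have "norm ((T ^^ n) z) \<le> norm ((T ^^ n) y)"
      unfolding z_iter by (rule R2.E_norm_le[OF B])
    with lower[of n] upper[of n] show ?thesis
      by linarith
  qed
  then have "norm z = 0"
    by (intro zero_if_le_geometric[OF r_nonneg r_less_d norm_ge_zero])
  then show ?thesis
    by (simp add: z_def y_def)
qed

lemma E'_E_zero_if_covered:
  assumes "finite L" "L \<subseteq> sphere 0 1" and \<rho>: "0 < \<rho>"
    and A: "A \<in> sets circle_borel" "A \<subseteq> (\<Union>c\<in>L. cball c \<rho>)" and B: "B \<in> sets circle_borel"
    and sep: "\<And>a b. a \<in> A \<Longrightarrow> b \<in> B \<Longrightarrow> 3 * \<rho> \<le> cmod (a - b)"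
  shows "E' B (E A x) = 0"
  using assms(1,2) A sep
proof (induction L arbitrary: A rule: finite_induct)
  case empty
  then show ?case
    using R1.orth_projection_zero[OF R2.E_orth_projection[OF B]] by simp
next
  case (insert l L)
  let ?D = "cball l \<rho>"
  have parts: "A \<inter> ?D \<in> sets circle_borel" "A - ?D \<in> sets circle_borel"
    using insert.prems(2) by (auto simp: sets_circle_borel_iff)
  have "A \<inter> ?D \<inter> (A - ?D) = {}" "A \<inter> ?D \<union> (A - ?D) = A"
    by auto
  then have "E' B (E A x) = E' B (E (A \<inter> ?D) x) + E' B (E (A - ?D) x)"
    using R1.E_Un[OF parts] R1.orth_projection_add[OF R2.E_orth_projection[OF B]] by metis
  moreover have "E' B (E (A - ?D) x) = 0"
    using insert.prems parts(2) by (intro insert.IH) auto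
  moreover have "E' B (E (A \<inter> ?D) x) = 0"
  proof (cases "A \<inter> ?D = {}")
    case True
    then show ?thesis
      using R1.orth_projection_zero[OF R2.E_orth_projection[OF B]] by simp
  next
    case False
    then obtain a where a: "a \<in> A" "cmod (a - l) \<le> \<rho>"
      by (auto simp: dist_norm norm_minus_commute)
    show ?thesis
    proof (rule E'_E_zero_if_disc_separated[OF _ parts(1) B])
      show "cmod l = 1"
        using insert.prems(1) by simp
      show "cmod (\<xi> - l) \<le> \<rho>" if "\<xi> \<in> A \<inter> ?D" for \<xi>
        using that by (simp add: dist_norm norm_minus_commute)
      show "2 * \<rho> \<le> cmod (b - l)" if "b \<in> B" for b
        using insert.prems(4)[OF a(1) that] norm_triangle_ineq4[of "a - l" "b - l"] a(2) by simp
    qed (use \<rho> in auto)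
  qed
  ultimately show ?case
    by simp
qed

lemma E'_E_zero_if_separated:
  assumes A: "A \<in> sets circle_borel" and B: "B \<in> sets circle_borel" and \<delta>: "0 < \<delta>"
    and sep: "\<And>a b. a \<in> A \<Longrightarrow> b \<in> B \<Longrightarrow> \<delta> \<le> cmod (a - b)"
  shows "E' B (E A x) = 0"
proof -
  obtain L :: "complex set" where L: "L \<subseteq> sphere 0 1" "finite L" "sphere 0 1 \<subseteq> (\<Union>c\<in>L. ball c (\<delta> / 3))"
    using compact_sphere[of "0 :: complex" 1]
  proof (rule compactE_image)
    show "sphere 0 1 \<subseteq> (\<Union>c\<in>sphere 0 1. ball c (\<delta> / 3))"
      using \<delta> by force
  qed auto
  have "A \<subseteq> (\<Union>c\<in>L. cball c (\<delta> / 3))"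
    using A L(3) by (force simp: sets_circle_borel_iff)
  with L(1,2) A B \<delta> sep show ?thesis
    by (intro E'_E_zero_if_covered[of L "\<delta> / 3"]) auto
qed

lemma norm_E'_closed_le:
  assumes F: "closed F" "F \<subseteq> sphere 0 1"
  shows "norm (E' F x) \<le> norm (E F x)"
proof (cases "F = {}")
  case False
  have F_sets: "F \<in> sets circle_borel"
    using F by (simp add: sets_circle_borel_iff)
  define G where "G n = sphere 0 1 \<inter> {\<xi>. infdist \<xi> F < 1 / Suc n}" for n :: nat
  have "open {\<xi>. infdist \<xi> F < 1 / Suc n}" for n
    by (intro open_Collect_less continuous_intros)
  then have G_sets: "G n \<in> sets circle_borel" for n
    by (auto simp: G_def sets_circle_borel_iff)
  have bound: "(norm (E' F x))\<^sup>2 \<le> measure (spec_meas ip E x) (G n)" for n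
  proof -
    have "E' F (E (sphere 0 1 - G n) x) = 0"
    proof (rule E'_E_zero_if_separated[OF _ F_sets, of _ "1 / Suc n"])
      fix a b assume "a \<in> sphere 0 1 - G n" "b \<in> F"
      then have "1 / Suc n \<le> infdist a F" "infdist a F \<le> dist a b"
        by (auto simp: G_def infdist_le)
      then show "1 / Suc n \<le> cmod (a - b)"
        by (simp add: dist_norm)
    qed (use G_sets in auto)
    moreover have "E' F x = E' F (E (G n) x) + E' F (E (sphere 0 1 - G n) x)"
      using R1.orth_projection_add[OF R2.E_orth_projection[OF F_sets], of "E (G n) x" "x - E (G n) x"]
      by (simp add: R1.E_Diff_sphere[OF G_sets])
    ultimately have "E' F x = E' F (E (G n) x)"
      by simp
    then have "norm (E' F x) \<le> norm (E (G n) x)"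
      by (metis R2.E_norm_le[OF F_sets])
    then show ?thesis
      by (simp add: R1.measure_spec_meas[OF G_sets] power_mono)
  qed
  have "decseq G"
    using decseq_infdist_less[of F] by (auto simp: G_def decseq_def)
  moreover have "(\<Inter>n. G n) = sphere 0 1 \<inter> (\<Inter>n. {\<xi>. infdist \<xi> F < 1 / Suc n})"
    by (auto simp: G_def)
  then have "(\<Inter>n. G n) = F"
    using Inter_infdist_less_closed[OF F(1) False] F(2) by auto
  ultimately have lim: "(\<lambda>n. measure (spec_meas ip E x) (G n)) \<longlonglongrightarrow> measure (spec_meas ip E x) F"
    using finite_measure.finite_Lim_measure_decseq[OF R1.finite_measure_spec_meas, of G] G_sets
    by auto
  have "(norm (E' F x))\<^sup>2 \<le> (norm (E F x))\<^sup>2"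
    unfolding R1.measure_spec_meas[OF F_sets, symmetric]
    by (rule LIMSEQ_le_const[OF lim]) (use bound in auto)
  then show ?thesis
    by (rule power2_le_imp_le) simp
qed simp

end

lemma two_spectral_representations_swap:
  "two_spectral_representations smul ip E E' U \<Longrightarrow> two_spectral_representations smul ip E' E U"
  unfolding two_spectral_representations_def by blast

context two_spectral_representations
begin

lemma norm_E'_closed_eq:
  assumes "closed F" "F \<subseteq> sphere 0 1"
  shows "norm (E' F x) = norm (E F x)"
proof -
  interpret swapped: two_spectral_representations smul ip E' E U
    by (rule two_spectral_representations_swap) unfold_locales
  show ?thesis
    using norm_E'_closed_le[OF assms] swapped.norm_E'_closed_le[OF assms] by (rule antisym)
qed

lemma norm_E'_eq:
  assumes A: "A \<in> sets circle_borel"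
  shows "norm (E' A x) = norm (E A x)"
proof -
  \<comment> \<open>\<open>inner_regular\<close> needs a measure on the Borel sets of the whole plane\<close>
  define \<nu> where "\<nu> E'' = distr (spec_meas ip E'' x) borel (\<lambda>\<xi>. \<xi>)" for E''
  have emeasure_\<nu>: "emeasure (\<nu> E'') K = ennreal ((norm (E'' (K \<inter> sphere 0 1) x))\<^sup>2)"
    if "projection_valued_measure smul ip E''" "K \<in> sets borel" for E'' K
  proof -
    interpret projection_valued_measure smul ip E''
      by (rule that(1))
    have "(\<lambda>\<xi>. \<xi>) \<in> measurable (spec_meas ip E'' x) borel"
      by (subst measurable_cong_sets[OF sets_spec_meas refl])
        (rule measurable_restrict_space1[OF measurable_id])
    moreover have "K \<inter> sphere 0 1 \<in> sets circle_borel"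
      using that(2) by (simp add: sets_circle_borel_iff)
    ultimately show ?thesis
      using that(2) by (simp add: \<nu>_def emeasure_distr emeasure_spec_meas Int_commute)
  qed
  have pvm: "projection_valued_measure smul ip E" "projection_valued_measure smul ip E'"
    by unfold_locales
  have finite: "emeasure (\<nu> E'') (space (\<nu> E'')) \<noteq> \<infinity>"
    if "projection_valued_measure smul ip E''" for E''
    using emeasure_\<nu>[OF that, of UNIV] by (simp add: \<nu>_def)
  have sets_\<nu>: "sets (\<nu> E'') = sets borel" for E''
    by (simp add: \<nu>_def)
  have compact_eq: "emeasure (\<nu> E) K = emeasure (\<nu> E') K" if "compact K" for K
    using that norm_E'_closed_eq[of "K \<inter> sphere 0 1" x]
    by (simp add: emeasure_\<nu>[OF pvm(1)] emeasure_\<nu>[OF pvm(2)] borel_compact compact_imp_closed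
        closed_Int)
  have A_borel: "A \<in> sets borel" and A_sphere: "A \<inter> sphere 0 1 = A"
    using A by (auto simp: sets_circle_borel_iff)
  have "emeasure (\<nu> E) A = (SUP K \<in> {K. K \<subseteq> A \<and> compact K}. emeasure (\<nu> E) K)"
    by (rule inner_regular[OF sets_\<nu> finite[OF pvm(1)] A_borel])
  also have "\<dots> = (SUP K \<in> {K. K \<subseteq> A \<and> compact K}. emeasure (\<nu> E') K)"
    using compact_eq by (intro SUP_cong) auto
  also have "\<dots> = emeasure (\<nu> E') A"
    by (rule inner_regular[OF sets_\<nu> finite[OF pvm(2)] A_borel, symmetric])
  finally have "(norm (E A x))\<^sup>2 = (norm (E' A x))\<^sup>2"
    using A_borel by (simp add: emeasure_\<nu>[OF pvm(1)] emeasure_\<nu>[OF pvm(2)] A_sphere)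
  then show ?thesis
    by (simp add: power2_eq_iff_nonneg)
qed

end

section \<open>Conjugations\<close>

locale hilbert_conjugation = hilbert_space smul ip
  for smul :: "complex \<Rightarrow> 'h::banach \<Rightarrow> 'h" and ip +
  fixes C :: "'h \<Rightarrow> 'h"
  assumes conjugation: "conjugation smul C"
begin

lemma C_add: "C (x + y) = C x + C y"
  and C_smul: "C (smul a x) = smul (cnj a) (C x)"
  and norm_C: "norm (C x) = norm x"
  and C_C [simp]: "C (C x) = x"
  using conjugation unfolding conjugation_def by blast+

lemma ip_C_C: "ip (C x) (C y) = cnj (ip x y)"
  by (rule antilinear_isometry_ip[OF C_add C_smul norm_C])

lemma inj_C: "inj C"
  by (metis C_C injI)

lemma continuous_on_C: "continuous_on UNIV C"
proof -
  have "C x - C y = C (x - y)" for x y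
    by (metis C_add diff_add_cancel add_diff_cancel_right')
  then have "dist (C x) (C y) = dist x y" for x y
    by (simp add: dist_norm norm_C)
  then show ?thesis
    unfolding continuous_on_iff by (metis UNIV_I)
qed

lemma image_C_orth_compl: "C ` orth_compl ip S = orth_compl ip (C ` S)"
proof
  show "C ` orth_compl ip S \<subseteq> orth_compl ip (C ` S)"
    by (auto simp: orth_compl_def ip_C_C)
  show "orth_compl ip (C ` S) \<subseteq> C ` orth_compl ip S"
  proof
    fix w assume "w \<in> orth_compl ip (C ` S)"
    then have "C w \<in> orth_compl ip S"
      using ip_C_C[of _ "C w"] by (auto simp: orth_compl_def)
    then show "w \<in> C ` orth_compl ip S"
      by (metis C_C imageI)
  qed
qed

end

locale spectral_conjugation =
  spectral_representation smul ip E U + hilbert_conjugation smul ip C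
  for smul :: "complex \<Rightarrow> 'h::banach \<Rightarrow> 'h" and ip E U C +
  assumes C_U_C: "C \<circ> U \<circ> C = U"
begin

lemma U_C: "U (C x) = C (U x)"
  using C_U_C C_C by (metis comp_apply)

definition E_conj :: "complex set \<Rightarrow> 'h \<Rightarrow> 'h" where
  "E_conj A x = C (E (cnj ` A) (C x))"

lemma pv_measure_E_conj: "pv_measure smul ip E_conj"
  unfolding pv_measure_def
proof (intro conjI ballI allI impI)
  fix A assume A: "A \<in> sets circle_borel"
  have P: "orth_projection smul ip (E (cnj ` A))"
    by (rule E_orth_projection[OF cnj_image_in_circle_borel[OF A]])
  have "ip (E_conj A x) y = ip x (E_conj A y)" for x y
  proof -
    have "ip (E_conj A x) y = cnj (ip (E (cnj ` A) (C x)) (C y))"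
      using ip_C_C[of "E (cnj ` A) (C x)" "C y"] by (simp add: E_conj_def)
    also have "\<dots> = ip x (E_conj A y)"
      using ip_C_C[of "C x" "E (cnj ` A) (C y)"] by (simp add: E_conj_def orth_projection_self_adjoint[OF P])
    finally show ?thesis .
  qed
  then show "orth_projection smul ip (E_conj A)"
    unfolding orth_projection_def clinear_map_def
    by (simp add: E_conj_def C_add C_smul orth_projection_add[OF P] orth_projection_smul[OF P]
        orth_projection_idem[OF P])
next
  show "E_conj {} = (\<lambda>x. 0)" "E_conj (sphere 0 1) = id"
    by (auto simp: E_conj_def fun_eq_iff C_add[of 0 0, simplified])
next
  fix A B assume "A \<in> sets circle_borel" "B \<in> sets circle_borel"
  moreover have "cnj ` (A \<inter> B) = cnj ` A \<inter> cnj ` B"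
    by (auto simp: image_cnj_eq_vimage)
  ultimately show "E_conj (A \<inter> B) = E_conj A \<circ> E_conj B"
    by (simp add: E_conj_def fun_eq_iff E_Int cnj_image_in_circle_borel)
next
  fix F :: "nat \<Rightarrow> complex set" and x
  assume F: "range F \<subseteq> sets circle_borel" "disjoint_family F"
  have "range (\<lambda>n. cnj ` F n) \<subseteq> sets circle_borel"
    using F(1) cnj_image_in_circle_borel by blast
  moreover have "disjoint_family (\<lambda>n. cnj ` F n)"
    using F(2) by (auto simp: disjoint_family_on_def image_cnj_eq_vimage)
  ultimately have "(\<lambda>n. C (E (cnj ` F n) (C x))) sums C (E (\<Union>n. cnj ` F n) (C x))"
    by (intro sums_additive_continuous[OF C_add continuous_on_C] E_sums)
  then show "(\<lambda>n. E_conj (F n) x) sums E_conj (\<Union>n. F n) x"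
    by (simp add: E_conj_def image_UN)
qed

lemma projection_valued_measure_E_conj: "projection_valued_measure smul ip E_conj"
  by unfold_locales (rule pv_measure_E_conj)

lemma spec_meas_E_conj: "spec_meas ip E_conj x = distr (spec_meas ip E (C x)) circle_borel cnj"
proof -
  interpret conj: projection_valued_measure smul ip E_conj
    by (rule projection_valued_measure_E_conj)
  show ?thesis
  proof (rule measure_eqI)
    fix A assume "A \<in> sets (spec_meas ip E_conj x)"
    then have A: "A \<in> sets circle_borel"
      by simp
    have "cnj \<in> measurable (spec_meas ip E (C x)) circle_borel"
      by (subst measurable_cong_sets[OF sets_spec_meas refl]) (rule cnj_measurable_circle_borel)
    moreover have "cnj -` A \<inter> space (spec_meas ip E (C x)) = cnj ` A"
      using A by (auto simp: sets_circle_borel_iff image_cnj_eq_vimage)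
    ultimately show "emeasure (spec_meas ip E_conj x) A
        = emeasure (distr (spec_meas ip E (C x)) circle_borel cnj) A"
      using A by (simp add: emeasure_distr conj.emeasure_spec_meas emeasure_spec_meas
          cnj_image_in_circle_borel E_conj_def norm_C)
  qed simp
qed

lemma ip_U_eq_integral_E_conj: "ip (U x) x = (\<integral>\<xi>. \<xi> \<partial>spec_meas ip E_conj x)"
proof -
  have "cnj \<in> measurable (spec_meas ip E (C x)) circle_borel"
    by (subst measurable_cong_sets[OF sets_spec_meas refl]) (rule cnj_measurable_circle_borel)
  moreover have "(\<lambda>\<xi>::complex. \<xi>) \<in> borel_measurable circle_borel"
    by (rule measurable_restrict_space1[OF measurable_id])
  ultimately have "(\<integral>\<xi>. \<xi> \<partial>spec_meas ip E_conj x) = (\<integral>\<xi>. cnj \<xi> \<partial>spec_meas ip E (C x))"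
    unfolding spec_meas_E_conj by (rule integral_distr)
  also have "\<dots> = cnj (ip (U (C x)) (C x))"
    by (simp add: ip_U_eq_integral)
  also have "\<dots> = ip (U x) x"
    by (simp add: U_C ip_C_C)
  finally show ?thesis ..
qed

lemma two_spectral_representations_E_conj: "two_spectral_representations smul ip E E_conj U"
  by unfold_locales (auto intro: pv_measure_E_conj ip_U_eq_integral_E_conj unitary pv_measure ip_U_eq_integral)

lemma emeasure_spec_meas_C:
  assumes A: "A \<in> sets circle_borel"
  shows "emeasure (spec_meas ip E (C x)) A = emeasure (spec_meas ip E x) (cnj ` A)"
proof -
  interpret two_spectral_representations smul ip E E_conj U
    by (rule two_spectral_representations_E_conj)
  have "norm (E A (C x)) = norm (E_conj A (C x))"
    by (rule norm_E'_eq[OF A, symmetric])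
  also have "\<dots> = norm (E (cnj ` A) x)"
    by (simp add: E_conj_def norm_C)
  finally show ?thesis
    using A by (simp add: emeasure_spec_meas cnj_image_in_circle_borel)
qed

lemma C_in_H_sub_conj_measure_iff:
  assumes M: "sets M = sets circle_borel"
  shows "C x \<in> H_sub ip E (conj_measure M) \<longleftrightarrow> x \<in> H_sub ip E M"
proof -
  have "C x \<in> H_sub ip E (conj_measure M) \<longleftrightarrow> (\<forall>N\<in>sets circle_borel.
      emeasure M (cnj ` N) = 0 \<longrightarrow> emeasure (spec_meas ip E x) (cnj ` N) = 0)"
    using M by (simp add: H_sub_iff emeasure_conj_measure emeasure_spec_meas_C)
  also have "\<dots> \<longleftrightarrow> (\<forall>N\<in>sets circle_borel.
      emeasure M N = 0 \<longrightarrow> emeasure (spec_meas ip E x) N = 0)"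
    by (rule ball_circle_borel_cnj_image[of
        "\<lambda>N. emeasure M N = 0 \<longrightarrow> emeasure (spec_meas ip E x) N = 0"])
  also have "\<dots> \<longleftrightarrow> x \<in> H_sub ip E M"
    by (rule H_sub_iff[OF M, symmetric])
  finally show ?thesis .
qed

lemma image_C_H_sub:
  assumes M: "sets M = sets circle_borel"
  shows "C ` H_sub ip E M = H_sub ip E (conj_measure M)"
proof
  show "C ` H_sub ip E M \<subseteq> H_sub ip E (conj_measure M)"
    using C_in_H_sub_conj_measure_iff[OF M] by auto
  show "H_sub ip E (conj_measure M) \<subseteq> C ` H_sub ip E M"
  proof
    fix y assume "y \<in> H_sub ip E (conj_measure M)"
    then have "C y \<in> H_sub ip E M"
      using C_in_H_sub_conj_measure_iff[OF M, of "C y"] by simp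
    then show "y \<in> C ` H_sub ip E M"
      by (metis C_C imageI)
  qed
qed

end

theorem theorem4p5:
  fixes smul :: "complex \<Rightarrow> 'h::banach \<Rightarrow> 'h"
    and ip :: "'h \<Rightarrow> 'h \<Rightarrow> complex"
    and U C :: "'h \<Rightarrow> 'h"
    and E :: "complex set \<Rightarrow> 'h \<Rightarrow> 'h"
    and M :: "complex measure"
  assumes hilb: "complex_hilbert smul ip"
    and sep: "separable_hspace TYPE('h)"
    and unit: "unitary_op smul ip U"
    and spec: "spectral_measure_of smul ip U E"
    and M_sets: "sets M = sets circle_borel"
    and M_fin: "finite_measure M"
    and conj: "conjugation smul C"
    and CUC: "C \<circ> U \<circ> C = U"
  shows "C ` H_sub ip E M = H_sub ip E (conj_measure M)
       \<and> C ` orth_compl ip (H_sub ip E M) = orth_compl ip (H_sub ip E (conj_measure M))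
       \<and> bij_betw C (H_sub ip E M) (H_sub ip E (conj_measure M))
       \<and> bij_betw C (orth_compl ip (H_sub ip E M)) (orth_compl ip (H_sub ip E (conj_measure M)))
       \<and> (\<forall>x. \<exists>y\<in>H_sub ip E M. \<exists>z\<in>orth_compl ip (H_sub ip E M). x = y + z \<and> C x = C y + C z)"
proof -
  interpret spectral_conjugation smul ip E U C
    using hilb unit spec conj CUC
    by unfold_locales (auto simp: spectral_measure_of_def)
  have H: "C ` H_sub ip E M = H_sub ip E (conj_measure M)"
    by (rule image_C_H_sub[OF M_sets])
  then have O: "C ` orth_compl ip (H_sub ip E M) = orth_compl ip (H_sub ip E (conj_measure M))"
    by (simp add: image_C_orth_compl)
  show ?thesis
    using H O inj_on_subset[OF inj_C subset_UNIV] exists_orth_decomposition_H_sub[OF M_sets] C_add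
    unfolding bij_betw_def by metis
qed

end
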